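(* Let $n\ge 3$ and let $C_n$ be the cycle graph on $n$ vertices. Then $hH_*^0(C_n)\cong H_*(\mathcal{M}(C_n))$, $hH_i^1(C_n)$ is $\mathbb{F}_2^2$ for $i=n-1$ and $0$ otherwise, and $hH_*^j(C_n)=0$ for $j\ge2$.
   Context: A finite simple graph $G$ is regarded as a simplicial complex of dimension at most $1$; its face poset $\mathcal{F}(G)$ is the directed graph with vertices the vertices and edges of $G$ and a directed edge $e\to v$ whenever $v$ is an endpoint of $e$. A matching on $\mathcal{F}(G)$ is a set $m$ of its edges, no two sharing an endpoint. Given $m$, reversing every edge of $m$ in $\mathcal{F}(G)$ gives a directed graph whose directed cycles (closed directed paths without repeated vertices) are said to be supported by $m$; $J(m)$ is their number, and $m$ is acyclic if $J(m)=0$. The matching complex $\mathrm{M}(G)$ has vertex set the edges of $\mathcal{F}(G)$ and simplices the nonempty matchings; $\mathcal{M}(G)$ is the subcomplex of nonempty acyclic matchings. Let $\widehat{C}_i^j(G)$ be the $\mathbb{F}_2$-vector space with basis the $i$-dimensional simplices (matchings with $i+1$ edges) $m$ with $J(m)=j$, and $\partial_J(m)$ the mod-2 sum of the sub-matchings $m\setminus\{e\}$ (for $e\in m$, $|m|\ge2$) with $J(m\setminus\{e\})=J(m)$. $hH_i^j(G)$ is the homology of $(\bigoplus\widehat{C}(G),\partial_J)$ in homological degree $i$ and filtration degree $j$. $H_*$ denotes simplicial homology with $\mathbb{F}_2$ coefficients. *)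

theory Defs
  imports Main
begin

text \<open>Finite simple graphs: vertex set V, edge set E of two-element subsets of V.
Faces of G as a simplicial complex: a vertex v is represented by the face {v},
an edge by the two-element set e itself.\<close>

type_synonym face = "nat set"
type_synonym arc = "face \<times> face"

definition cycV :: "nat \<Rightarrow> nat set" where
  "cycV n = {..<n}"

definition cycE :: "nat \<Rightarrow> nat set set" where
  "cycE n = {{i, Suc i mod n} | i. i < n}"

definition fp_arcs :: "nat set set \<Rightarrow> arc set" where
  "fp_arcs E = {(e, {v}) | e v. e \<in> E \<and> v \<in> e}"

definition is_matching :: "arc set \<Rightarrow> arc set \<Rightarrow> bool" where
  "is_matching A m \<longleftrightarrow> m \<subseteq> A \<and>
     (\<forall>a\<in>m. \<forall>b\<in>m. a \<noteq> b \<longrightarrow>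
        fst a \<noteq> fst b \<and> fst a \<noteq> snd b \<and> snd a \<noteq> fst b \<and> snd a \<noteq> snd b)"

definition reversed :: "arc set \<Rightarrow> arc set \<Rightarrow> arc set" where
  "reversed A m = (A - m) \<union> {(y, x) | x y. (x, y) \<in> m}"

definition cyc_arcs :: "'a list \<Rightarrow> ('a \<times> 'a) set" where
  "cyc_arcs xs = {(xs ! k, xs ! (Suc k mod length xs)) | k. k < length xs}"

text \<open>Directed cycles (closed directed paths without repeated vertices) of a digraph
with arc set D, each identified with its set of arcs.\<close>
definition dcycles :: "('a \<times> 'a) set \<Rightarrow> ('a \<times> 'a) set set" where
  "dcycles D = {cyc_arcs xs | xs. xs \<noteq> [] \<and> distinct xs \<and> cyc_arcs xs \<subseteq> D}"

definition Jnum :: "arc set \<Rightarrow> arc set \<Rightarrow> nat" where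
  "Jnum A m = card (dcycles (reversed A m))"

definition match_simplices :: "arc set \<Rightarrow> arc set set" where
  "match_simplices A = {m. m \<noteq> {} \<and> is_matching A m}"

definition acyc_simplices :: "arc set \<Rightarrow> arc set set" where
  "acyc_simplices A = {m \<in> match_simplices A. Jnum A m = 0}"

definition symdiff :: "'a set \<Rightarrow> 'a set \<Rightarrow> 'a set" where
  "symdiff X Y = (X - Y) \<union> (Y - X)"

text \<open>F2-linear extension of a boundary map given on basis simplices; chains over F2
are finite sets of simplices, addition is symmetric difference.\<close>
definition lin :: "('s \<Rightarrow> 's set) \<Rightarrow> 's set \<Rightarrow> 's set" where
  "lin bd c = {x. odd (card {s \<in> c. x \<in> bd s})}"

text \<open>Homology (with F2 coefficients) in degree i of the chain complex with basis S,
where a simplex s has degree card s - 1, and boundary bd: the set of cosets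
z + B_i of the space of boundaries B_i, for z in the cycles Z_i.\<close>
definition homology :: "'a set set \<Rightarrow> ('a set \<Rightarrow> 'a set set) \<Rightarrow> nat \<Rightarrow> 'a set set set set" where
  "homology S bd i =
     (let Z = {c. c \<subseteq> {s \<in> S. card s = Suc i} \<and> lin bd c = {}};
          B = lin bd ` Pow {s \<in> S. card s = Suc (Suc i)}
      in (\<lambda>z. (\<lambda>b. symdiff z b) ` B) ` Z)"

definition simp_bd :: "'a set \<Rightarrow> 'a set set" where
  "simp_bd m = {m - {e} | e. e \<in> m \<and> card m \<ge> 2}"

definition simp_homology :: "'a set set \<Rightarrow> nat \<Rightarrow> 'a set set set set" where
  "simp_homology K i = homology K simp_bd i"

definition bdJ :: "arc set \<Rightarrow> arc set \<Rightarrow> arc set set" where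
  "bdJ A m = {m - {e} | e. e \<in> m \<and> card m \<ge> 2 \<and> Jnum A (m - {e}) = Jnum A m}"

definition hH :: "nat set set \<Rightarrow> nat \<Rightarrow> nat \<Rightarrow> arc set set set set" where
  "hH E i j = homology {m \<in> match_simplices (fp_arcs E). Jnum (fp_arcs E) m = j} (bdJ (fp_arcs E)) i"

end

theory Submission
  imports Defs
begin

text \<open>Reversing a matching m of the face poset of the cycle C_n gives a digraph in which every
arc joins an edge to one of its endpoints. Following a directed cycle of it, a vertex v is entered
along an unmatched arc and left along a matched one, so both edges at v lie on the cycle, and then
so does the next vertex; hence a directed cycle passes through every vertex and every edge. Every
edge is then matched, every node has a unique successor, and the cycle is the whole digraph:
J(m) \<le> 1, with equality exactly for the two matchings pairing every edge {k, k+1} with k, resp.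
with k+1. These cover all edges, so deleting an arc from any matching gives J = 0. Consequently
the boundary of filtration degree 0 is the simplicial one, it vanishes in degree 1, whose only
simplices are the two (n-1)-dimensional matchings above, and there are no simplices with J \<ge> 2.\<close>

lemma cyc_arcs_in_set:
  assumes "(a, b) \<in> cyc_arcs xs"
  shows "a \<in> set xs" "b \<in> set xs"
proof -
  obtain k where k: "k < length xs" "a = xs ! k" "b = xs ! (Suc k mod length xs)"
    using assms unfolding cyc_arcs_def by blast
  then have "0 < length xs" by linarith
  then have "Suc k mod length xs < length xs" by simp
  with k show "a \<in> set xs" "b \<in> set xs" by simp_all
qed

lemma cyc_arcs_succ_exists: "x \<in> set xs \<Longrightarrow> \<exists>y. (x, y) \<in> cyc_arcs xs"
  unfolding cyc_arcs_def by (auto simp: in_set_conv_nth)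

lemma cyc_arcs_pred_exists:
  assumes "x \<in> set xs"
  shows "\<exists>p. (p, x) \<in> cyc_arcs xs"
proof -
  obtain k where k: "k < length xs" "xs ! k = x"
    using assms by (auto simp: in_set_conv_nth)
  from k(1) obtain l where l: "length xs = Suc l"
    by (cases "length xs") auto
  define j where "j = (k + l) mod Suc l"
  have "Suc j mod length xs = (k + Suc l) mod Suc l"
    unfolding j_def l by (simp add: mod_Suc_eq)
  also have "\<dots> = k"
    using k(1) l by (metis mod_add_self2 mod_less)
  finally have "Suc j mod length xs = k" .
  moreover have "j < length xs"
    unfolding j_def l by simp
  ultimately show ?thesis
    using k(2) unfolding cyc_arcs_def by auto
qed

lemma walk_segment_is_cycle:
  assumes walk: "\<And>k. (g k, g (Suc k)) \<in> D"
    and "i < j" "g i = g j" "inj_on g {i..<j}"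
  shows "map g [i..<j] \<noteq> [] \<and> distinct (map g [i..<j]) \<and> cyc_arcs (map g [i..<j]) \<subseteq> D"
proof -
  define xs where "xs = map g [i..<j]"
  have len: "length xs = j - i" and nth: "\<And>k. k < j - i \<Longrightarrow> xs ! k = g (i + k)"
    by (simp_all add: xs_def)
  have "cyc_arcs xs \<subseteq> D"
  proof
    fix p assume "p \<in> cyc_arcs xs"
    then obtain k where k: "k < j - i" "p = (xs ! k, xs ! (Suc k mod (j - i)))"
      unfolding cyc_arcs_def len by blast
    have "xs ! (Suc k mod (j - i)) = g (Suc (i + k))"
    proof (cases "Suc k < j - i")
      case True
      then show ?thesis by (simp add: nth)
    next
      case False
      with k(1) have "Suc k = j - i" by simp
      then have "Suc k mod (j - i) = 0" "Suc (i + k) = j"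
        using \<open>i < j\<close> by simp_all
      with \<open>i < j\<close> \<open>g i = g j\<close> show ?thesis by (simp add: nth)
    qed
    with k walk show "p \<in> D" by (simp add: nth)
  qed
  with assms show ?thesis
    unfolding xs_def by (simp add: distinct_map)
qed

lemma finite_digraph_has_cycle:
  assumes "finite N" "x0 \<in> N" and out: "\<forall>x\<in>N. \<exists>y\<in>N. (x, y) \<in> D"
  shows "\<exists>xs. xs \<noteq> [] \<and> distinct xs \<and> cyc_arcs xs \<subseteq> D"
proof -
  define f where "f x = (SOME y. y \<in> N \<and> (x, y) \<in> D)" for x
  have f: "f x \<in> N \<and> (x, f x) \<in> D" if "x \<in> N" for x
    unfolding f_def using out that by (metis (mono_tags, lifting) someI_ex)
  define g where "g k = (f ^^ k) x0" for k
  have g_in: "g k \<in> N" for k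
    by (induction k) (simp_all add: g_def \<open>x0 \<in> N\<close> f)
  have walk: "(g k, g (Suc k)) \<in> D" for k
    using f[OF g_in] by (simp add: g_def)
  define P where "P j \<longleftrightarrow> (\<exists>i<j. g i = g j)" for j
  have "\<not> inj_on g {..card N}"
  proof
    assume "inj_on g {..card N}"
    then have "card (g ` {..card N}) = Suc (card N)" by (simp add: card_image)
    moreover have "card (g ` {..card N}) \<le> card N"
      using g_in \<open>finite N\<close> by (intro card_mono) auto
    ultimately show False by simp
  qed
  then obtain a b where "a \<noteq> b" "g a = g b" unfolding inj_on_def by blast
  then have "P (max a b)"
    unfolding P_def by (cases "a < b") (auto simp: max_def intro: exI[of _ a] exI[of _ b])
  define j where "j = (LEAST j. P j)"
  have "P j" unfolding j_def by (rule LeastI) fact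
  then obtain i where "i < j" "g i = g j" unfolding P_def by blast
  have no_repeat: "g i' \<noteq> g j'" if "i' < j'" "j' < j" for i' j'
    using not_less_Least[of j' P] that unfolding P_def j_def by blast
  have "inj_on g {i..<j}"
  proof (rule inj_onI)
    fix a b assume "a \<in> {i..<j}" "b \<in> {i..<j}" "g a = g b"
    then show "a = b"
      using no_repeat[of a b] no_repeat[of b a] by (cases a b rule: linorder_cases) auto
  qed
  with walk_segment_is_cycle[OF walk \<open>i < j\<close> \<open>g i = g j\<close>] show ?thesis by blast
qed

lemma reversed_iff: "(x, y) \<in> reversed A m \<longleftrightarrow> (x, y) \<in> A \<and> (x, y) \<notin> m \<or> (y, x) \<in> m"
  unfolding reversed_def by auto

lemma is_matching_subset: "is_matching A m \<Longrightarrow> m' \<subseteq> m \<Longrightarrow> is_matching A m'"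
  unfolding is_matching_def by blast

lemma is_matching_fst_eq:
  "is_matching A m \<Longrightarrow> a \<in> m \<Longrightarrow> b \<in> m \<Longrightarrow> fst a = fst b \<Longrightarrow> a = b"
  unfolding is_matching_def by blast

lemma is_matching_snd_eq:
  "is_matching A m \<Longrightarrow> a \<in> m \<Longrightarrow> b \<in> m \<Longrightarrow> snd a = snd b \<Longrightarrow> a = b"
  unfolding is_matching_def by blast

lemma homology_cong:
  assumes "\<And>s. s \<in> S \<Longrightarrow> bd s = bd' s"
  shows "homology S bd i = homology S bd' i"
proof -
  have lin: "lin bd c = lin bd' c" if "c \<subseteq> S" for c
  proof -
    have "{s \<in> c. x \<in> bd s} = {s \<in> c. x \<in> bd' s}" for x
      using assms that by auto
    then show ?thesis unfolding lin_def by simp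
  qed
  have "{c. c \<subseteq> {s \<in> S. card s = Suc i} \<and> lin bd c = {}}
      = {c. c \<subseteq> {s \<in> S. card s = Suc i} \<and> lin bd' c = {}}"
    using lin by auto
  moreover have "lin bd ` Pow {s \<in> S. card s = Suc (Suc i)}
      = lin bd' ` Pow {s \<in> S. card s = Suc (Suc i)}"
    using lin by (intro image_cong) auto
  ultimately show ?thesis
    unfolding homology_def Let_def by simp
qed

lemma card_homology_zero_boundary:
  assumes "finite S" and "\<And>s. s \<in> S \<Longrightarrow> bd s = {}"
  shows "card (homology S bd i) = 2 ^ card {s \<in> S. card s = Suc i}"
proof -
  define T where "T = {s \<in> S. card s = Suc i}"
  have lin: "lin bd c = {}" if "c \<subseteq> S" for c
  proof -
    have empty: "{s \<in> c. x \<in> bd s} = {}" for x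
      using assms(2) that by auto
    show ?thesis unfolding lin_def empty by simp
  qed
  then have "{c. c \<subseteq> T \<and> lin bd c = {}} = Pow T"
    unfolding T_def by auto
  moreover have "lin bd ` Pow {s \<in> S. card s = Suc (Suc i)} = {{}}"
    using lin by auto
  moreover have "symdiff z {} = z" for z :: "'a set set"
    unfolding symdiff_def by simp
  ultimately have "homology S bd i = (\<lambda>z. {z}) ` Pow T"
    unfolding homology_def Let_def T_def by simp
  moreover have "finite T" using assms(1) unfolding T_def by simp
  ultimately show ?thesis
    by (simp add: card_image card_Pow T_def)
qed

definition cyc_edge :: "nat \<Rightarrow> nat \<Rightarrow> nat set" where
  "cyc_edge n k = {k, Suc k mod n}"

definition edge_matching :: "nat \<Rightarrow> (nat \<Rightarrow> nat) \<Rightarrow> arc set" where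
  "edge_matching n f = (\<lambda>k. (cyc_edge n k, {f k})) ` {..<n}"

definition tail_matching :: "nat \<Rightarrow> arc set" where
  "tail_matching n = edge_matching n (\<lambda>k. k)"

definition head_matching :: "nat \<Rightarrow> arc set" where
  "head_matching n = edge_matching n (\<lambda>k. Suc k mod n)"

lemma mem_cyc_edge: "v \<in> cyc_edge n k \<longleftrightarrow> v = k \<or> v = Suc k mod n"
  unfolding cyc_edge_def by auto

lemma tail_mem_cyc_edge: "k \<in> cyc_edge n k"
  by (simp add: mem_cyc_edge)

lemma head_mem_cyc_edge: "Suc k mod n \<in> cyc_edge n k"
  by (simp add: mem_cyc_edge)

lemma cycE_eq: "cycE n = cyc_edge n ` {..<n}"
  unfolding cycE_def cyc_edge_def by auto

lemma Suc_mod_eq: "k < n \<Longrightarrow> Suc k mod n = (if Suc k = n then 0 else Suc k)"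
  by auto

lemma Suc_mod_inj: "j < n \<Longrightarrow> k < n \<Longrightarrow> Suc j mod n = Suc k mod n \<Longrightarrow> j = k"
  by (auto simp: Suc_mod_eq split: if_splits)

lemma Suc_mod_inj_on: "inj_on (\<lambda>k. Suc k mod n) {..<n}"
  by (rule inj_onI) (rule Suc_mod_inj; simp)

locale cycle_graph =
  fixes n :: nat
  assumes three_le: "3 \<le> n"
begin

abbreviation poset_arcs :: "arc set" where
  "poset_arcs \<equiv> fp_arcs (cycE n)"

lemma Suc_mod_lt: "Suc k mod n < n"
  using three_le by simp

lemma Suc_mod_neq: "k < n \<Longrightarrow> Suc k mod n \<noteq> k"
  using three_le by (auto simp: Suc_mod_eq)

lemma mem_cyc_edge_less: "k < n \<Longrightarrow> v \<in> cyc_edge n k \<Longrightarrow> v < n"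
  using Suc_mod_lt by (auto simp: mem_cyc_edge)

lemma cyc_edge_inj:
  assumes "j < n" "k < n" "cyc_edge n j = cyc_edge n k"
  shows "j = k"
proof (rule ccontr)
  assume "j \<noteq> k"
  \<comment> \<open>then {j, j+1} = {k, k+1} forces j = k+1 and k = j+1: a 2-cycle, excluded by n \<ge> 3\<close>
  with assms(3) have "j = Suc k mod n" "Suc j mod n = k"
    unfolding cyc_edge_def by (auto simp: doubleton_eq_iff)
  with assms(1,2) three_le show False by (auto simp: Suc_mod_eq split: if_splits)
qed

lemma cyc_edge_eq_iff: "j < n \<Longrightarrow> k < n \<Longrightarrow> cyc_edge n j = cyc_edge n k \<longleftrightarrow> j = k"
  using cyc_edge_inj by blast

lemma cyc_edge_neq_singleton [simp]:
  assumes "k < n"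
  shows "cyc_edge n k \<noteq> {v}" "{v} \<noteq> cyc_edge n k"
proof -
  have "k \<in> cyc_edge n k" "Suc k mod n \<in> cyc_edge n k"
    by (simp_all add: mem_cyc_edge)
  with Suc_mod_neq[OF assms] show "cyc_edge n k \<noteq> {v}" "{v} \<noteq> cyc_edge n k"
    by (metis singletonD)+
qed

lemma cyc_edges_share_vertex:
  assumes "j < n" "k < n" "j \<noteq> k" "v \<in> cyc_edge n j" "v \<in> cyc_edge n k"
  shows "j = v \<or> k = v"
proof (rule ccontr)
  assume "\<not> (j = v \<or> k = v)"
  with assms(4,5) have "Suc j mod n = Suc k mod n" by (auto simp: mem_cyc_edge)
  with Suc_mod_inj assms(1-3) show False by blast
qed

lemma poset_arcs_iff:
  "(x, y) \<in> poset_arcs \<longleftrightarrow> (\<exists>k<n. x = cyc_edge n k \<and> (\<exists>u\<in>cyc_edge n k. y = {u}))"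
  unfolding fp_arcs_def cycE_eq by auto

lemma edge_arc_iff:
  "k < n \<Longrightarrow> (cyc_edge n k, y) \<in> poset_arcs \<longleftrightarrow> (\<exists>u\<in>cyc_edge n k. y = {u})"
  by (auto simp: poset_arcs_iff cyc_edge_eq_iff)

lemma reversed_arc_cases:
  assumes "m \<subseteq> poset_arcs" "(x, y) \<in> reversed poset_arcs m"
  obtains (unmatched) k u where "k < n" "u \<in> cyc_edge n k" "x = cyc_edge n k" "y = {u}" "(x, y) \<notin> m"
    | (matched) k v where "k < n" "v \<in> cyc_edge n k" "x = {v}" "y = cyc_edge n k" "(y, x) \<in> m"
proof -
  from assms(2) consider "(x, y) \<in> poset_arcs" "(x, y) \<notin> m" | "(y, x) \<in> m"
    unfolding reversed_iff by blast
  then show thesis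
  proof cases
    case 1
    from 1(1) obtain k u where "k < n" "u \<in> cyc_edge n k" "x = cyc_edge n k" "y = {u}"
      unfolding poset_arcs_iff by blast
    then show thesis using 1(2) by (rule unmatched)
  next
    case 2
    with assms(1) have "(y, x) \<in> poset_arcs" by blast
    then obtain k v where "k < n" "v \<in> cyc_edge n k" "x = {v}" "y = cyc_edge n k"
      unfolding poset_arcs_iff by blast
    then show thesis using 2 by (rule matched)
  qed
qed

lemma reversed_arc_from_vertex:
  assumes "m \<subseteq> poset_arcs" "({v}, y) \<in> reversed poset_arcs m"
  obtains k where "k < n" "v \<in> cyc_edge n k" "y = cyc_edge n k" "(y, {v}) \<in> m"
  using assms
proof (cases rule: reversed_arc_cases)
  case (unmatched k u)
  then show thesis using cyc_edge_neq_singleton(2) by blast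
next
  case (matched k v')
  then show thesis using that by blast
qed

lemma reversed_arc_to_vertex:
  assumes "m \<subseteq> poset_arcs" "(p, {v}) \<in> reversed poset_arcs m"
  obtains k where "k < n" "v \<in> cyc_edge n k" "p = cyc_edge n k" "(p, {v}) \<notin> m"
  using assms
proof (cases rule: reversed_arc_cases)
  case (unmatched k u)
  then show thesis using that by blast
next
  case (matched k v')
  then show thesis using cyc_edge_neq_singleton(2) by blast
qed

lemma reversed_arc_from_edge:
  assumes "m \<subseteq> poset_arcs" "k < n" "(cyc_edge n k, y) \<in> reversed poset_arcs m"
  obtains u where "u \<in> cyc_edge n k" "y = {u}" "(cyc_edge n k, {u}) \<notin> m"
  using assms(1,3)
proof (cases rule: reversed_arc_cases)
  case (unmatched k' u)
  with assms(2) have "k' = k" using cyc_edge_inj by blast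
  with unmatched show thesis using that by blast
next
  case (matched k' v)
  with assms(2) show thesis using cyc_edge_neq_singleton(1) by blast
qed

lemma reversed_arc_to_edge:
  assumes "m \<subseteq> poset_arcs" "k < n" "(p, cyc_edge n k) \<in> reversed poset_arcs m"
  obtains w where "w \<in> cyc_edge n k" "p = {w}" "(cyc_edge n k, {w}) \<in> m"
  using assms(1,3)
proof (cases rule: reversed_arc_cases)
  case (unmatched k' u)
  with assms(2) show thesis using cyc_edge_neq_singleton(1) by blast
next
  case (matched k' v)
  with assms(2) have "k' = k" using cyc_edge_inj by blast
  with matched show thesis using that by blast
qed

end

locale reversal_cycle = cycle_graph +
  fixes m :: "arc set" and xs :: "face list"
  assumes matching: "is_matching poset_arcs m"
    and nonempty: "xs \<noteq> []"
    and cycle: "cyc_arcs xs \<subseteq> reversed poset_arcs m"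
begin

lemma matching_subset: "m \<subseteq> poset_arcs"
  using matching unfolding is_matching_def by blast

lemma cycle_succ:
  assumes "x \<in> set xs"
  obtains y where "y \<in> set xs" "(x, y) \<in> cyc_arcs xs" "(x, y) \<in> reversed poset_arcs m"
proof -
  obtain y where y: "(x, y) \<in> cyc_arcs xs" using cyc_arcs_succ_exists[OF assms] by blast
  show thesis
    by (rule that[OF cyc_arcs_in_set(2)[OF y] y subsetD[OF cycle y]])
qed

lemma cycle_pred:
  assumes "x \<in> set xs"
  obtains p where "p \<in> set xs" "(p, x) \<in> reversed poset_arcs m"
proof -
  obtain p where p: "(p, x) \<in> cyc_arcs xs" using cyc_arcs_pred_exists[OF assms] by blast
  show thesis
    by (rule that[OF cyc_arcs_in_set(1)[OF p] subsetD[OF cycle p]])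
qed

text \<open>The cycle enters a vertex v along an arc of F(C_n) not in m and leaves it along a
reversed arc of m; these come from two distinct edges at v, one of which is {v, v+1}.\<close>
lemma vertex_imp_edge_on_cycle:
  assumes "{v} \<in> set xs" "v < n"
  shows "cyc_edge n v \<in> set xs"
proof -
  obtain y where y: "y \<in> set xs" "({v}, y) \<in> reversed poset_arcs m"
    using cycle_succ[OF assms(1)] by blast
  obtain k where k: "k < n" "v \<in> cyc_edge n k" "y = cyc_edge n k" "(y, {v}) \<in> m"
    using reversed_arc_from_vertex[OF matching_subset y(2)] by blast
  obtain p where p: "p \<in> set xs" "(p, {v}) \<in> reversed poset_arcs m"
    using cycle_pred[OF assms(1)] by blast
  obtain k' where k': "k' < n" "v \<in> cyc_edge n k'" "p = cyc_edge n k'" "(p, {v}) \<notin> m"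
    using reversed_arc_to_vertex[OF matching_subset p(2)] by blast
  have "k \<noteq> k'"
  proof
    assume "k = k'"
    with k(3) k'(3) have "p = y" by simp
    with k(4) k'(4) show False by simp
  qed
  then have "k = v \<or> k' = v"
    using cyc_edges_share_vertex[OF k(1) k'(1) _ k(2) k'(2)] by blast
  then show ?thesis
  proof
    assume "k = v"
    with k(3) y(1) show ?thesis by simp
  next
    assume "k' = v"
    with k'(3) p(1) show ?thesis by simp
  qed
qed

lemma edge_imp_head_on_cycle:
  assumes "cyc_edge n k \<in> set xs" "k < n"
  shows "{Suc k mod n} \<in> set xs"
proof -
  obtain p where p: "p \<in> set xs" "(p, cyc_edge n k) \<in> reversed poset_arcs m"
    using cycle_pred[OF assms(1)] by blast
  obtain w where w: "w \<in> cyc_edge n k" "p = {w}" "(cyc_edge n k, {w}) \<in> m"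
    using reversed_arc_to_edge[OF matching_subset assms(2) p(2)] by blast
  obtain y where y: "y \<in> set xs" "(cyc_edge n k, y) \<in> reversed poset_arcs m"
    using cycle_succ[OF assms(1)] by blast
  obtain u where u: "u \<in> cyc_edge n k" "y = {u}" "(cyc_edge n k, {u}) \<notin> m"
    using reversed_arc_from_edge[OF matching_subset assms(2) y(2)] by blast
  have "u \<noteq> w"
  proof
    assume "u = w"
    with u(3) w(3) show False by simp
  qed
  with u(1) w(1) have "Suc k mod n = u \<or> Suc k mod n = w" by (auto simp: mem_cyc_edge)
  then show ?thesis
  proof
    assume "Suc k mod n = u"
    with y(1) u(2) show ?thesis by simp
  next
    assume "Suc k mod n = w"
    with p(1) w(2) show ?thesis by simp
  qed
qed

lemma cycle_meets_vertex: "\<exists>v<n. {v} \<in> set xs"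
proof -
  have hd: "hd xs \<in> set xs" using nonempty by simp
  then obtain y where y: "y \<in> set xs" "(hd xs, y) \<in> reversed poset_arcs m"
    using cycle_succ by blast
  from matching_subset y(2) show ?thesis
  proof (cases rule: reversed_arc_cases)
    case (unmatched k u)
    with y(1) have "u < n" "{u} \<in> set xs" using mem_cyc_edge_less by simp_all
    then show ?thesis by blast
  next
    case (matched k v)
    with hd have "v < n" "{v} \<in> set xs" using mem_cyc_edge_less by simp_all
    then show ?thesis by blast
  qed
qed

lemma vertex_on_cycle: "v < n \<Longrightarrow> {v} \<in> set xs"
proof -
  obtain v0 where v0: "v0 < n" "{v0} \<in> set xs" using cycle_meets_vertex by blast
  have walk_around: "{(v0 + j) mod n} \<in> set xs" for j
  proof (induction j)
    case 0
    then show ?case using v0 by simp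
  next
    case (Suc j)
    have lt: "(v0 + j) mod n < n" using three_le by simp
    with Suc have "cyc_edge n ((v0 + j) mod n) \<in> set xs"
      by (rule vertex_imp_edge_on_cycle)
    then have "{Suc ((v0 + j) mod n) mod n} \<in> set xs"
      using lt by (rule edge_imp_head_on_cycle)
    then show ?case by (simp add: mod_Suc_eq)
  qed
  assume "v < n"
  then have "(v0 + (v + n - v0)) mod n = v" using v0 by simp
  then show "{v} \<in> set xs" using walk_around[of "v + n - v0"] by simp
qed

lemma edge_on_cycle: "k < n \<Longrightarrow> cyc_edge n k \<in> set xs"
  using vertex_imp_edge_on_cycle vertex_on_cycle by blast

lemma edge_matched:
  assumes "k < n"
  obtains w where "w \<in> cyc_edge n k" "(cyc_edge n k, {w}) \<in> m"
proof -
  obtain p where "(p, cyc_edge n k) \<in> reversed poset_arcs m"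
    using cycle_pred[OF edge_on_cycle[OF assms]] by blast
  with reversed_arc_to_edge[OF matching_subset assms] that show thesis by blast
qed

text \<open>Since every edge is matched, every node of the reversed digraph has a unique successor.\<close>
lemma reversed_succ_unique:
  assumes "(x, y) \<in> reversed poset_arcs m" "(x, y') \<in> reversed poset_arcs m"
  shows "y = y'"
  using matching_subset assms(1)
proof (cases rule: reversed_arc_cases)
  case (unmatched k u)
  obtain w where w: "w \<in> cyc_edge n k" "(cyc_edge n k, {w}) \<in> m"
    using edge_matched[OF unmatched(1)] by blast
  obtain u' where u': "u' \<in> cyc_edge n k" "y' = {u'}" "(cyc_edge n k, {u'}) \<notin> m"
    using reversed_arc_from_edge[OF matching_subset unmatched(1)] assms(2) unmatched(3) by blast
  have "u \<noteq> w" "u' \<noteq> w" using unmatched(3-5) w(2) u'(3) by auto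
  with unmatched(2,4) w(1) u'(1,2) show ?thesis by (auto simp: mem_cyc_edge)
next
  case (matched k v)
  have "(y', {v}) \<in> m"
    using reversed_arc_from_vertex[OF matching_subset] assms(2) matched(3) by blast
  with matched(3,5) have "(y', {v}) = (y, {v})"
    using is_matching_snd_eq[OF matching, of "(y', {v})" "(y, {v})"] by simp
  then show ?thesis by simp
qed

lemma cycle_eq_reversed: "cyc_arcs xs = reversed poset_arcs m"
proof
  show "reversed poset_arcs m \<subseteq> cyc_arcs xs"
  proof (rule subrelI)
    fix x y assume xy: "(x, y) \<in> reversed poset_arcs m"
    have "x \<in> set xs"
      using matching_subset xy
    proof (cases rule: reversed_arc_cases)
      case (unmatched k u)
      then show ?thesis using edge_on_cycle by simp
    next
      case (matched k v)
      then show ?thesis using vertex_on_cycle mem_cyc_edge_less by simp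
    qed
    then obtain y' where "(x, y') \<in> cyc_arcs xs" "(x, y') \<in> reversed poset_arcs m"
      using cycle_succ by blast
    with xy reversed_succ_unique show "(x, y) \<in> cyc_arcs xs" by blast
  qed
qed (rule cycle)

end

context cycle_graph
begin

lemma dcycles_reversed_subset:
  assumes "is_matching poset_arcs m"
  shows "dcycles (reversed poset_arcs m) \<subseteq> {reversed poset_arcs m}"
proof
  fix C assume "C \<in> dcycles (reversed poset_arcs m)"
  then obtain xs where xs: "C = cyc_arcs xs" "xs \<noteq> []" "cyc_arcs xs \<subseteq> reversed poset_arcs m"
    unfolding dcycles_def by blast
  with assms have "reversal_cycle n m xs"
    by (intro reversal_cycle.intro cycle_graph_axioms reversal_cycle_axioms.intro)
  with xs(1) show "C \<in> {reversed poset_arcs m}"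
    using reversal_cycle.cycle_eq_reversed by blast
qed

lemma Jnum_le_one:
  assumes "is_matching poset_arcs m"
  shows "Jnum poset_arcs m \<le> 1"
proof -
  have "card (dcycles (reversed poset_arcs m)) \<le> card {reversed poset_arcs m}"
    using dcycles_reversed_subset[OF assms] by (intro card_mono) simp_all
  then show ?thesis unfolding Jnum_def by simp
qed

lemma Jnum_eq_one_iff_has_dcycle:
  assumes "is_matching poset_arcs m"
  shows "Jnum poset_arcs m = 1 \<longleftrightarrow> dcycles (reversed poset_arcs m) \<noteq> {}"
  using subset_singletonD[OF dcycles_reversed_subset[OF assms]] unfolding Jnum_def by auto

lemma matching_arc_source:
  assumes "is_matching poset_arcs m" "a \<in> m"
  obtains k where "k < n" "fst a = cyc_edge n k"
proof -
  from assms have "(fst a, snd a) \<in> poset_arcs" unfolding is_matching_def by auto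
  then show thesis using that unfolding poset_arcs_iff by blast
qed

lemma matching_eq_edge_matching:
  assumes m: "is_matching poset_arcs m" and f: "\<And>k. k < n \<Longrightarrow> (cyc_edge n k, {f k}) \<in> m"
  shows "m = edge_matching n f"
proof
  show "edge_matching n f \<subseteq> m" unfolding edge_matching_def using f by blast
  show "m \<subseteq> edge_matching n f"
  proof
    fix a assume a: "a \<in> m"
    obtain k where k: "k < n" "fst a = cyc_edge n k"
      using matching_arc_source[OF m a] by blast
    then have "a = (cyc_edge n k, {f k})"
      using is_matching_fst_eq[OF m a f[OF k(1)]] by simp
    with k(1) show "a \<in> edge_matching n f" unfolding edge_matching_def by blast
  qed
qed

lemma matched_endpoint:
  assumes "is_matching poset_arcs m" "k < n" "(cyc_edge n k, {w}) \<in> m"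
  shows "w \<in> cyc_edge n k"
proof -
  have "(cyc_edge n k, {w}) \<in> poset_arcs"
    using assms(1,3) unfolding is_matching_def by blast
  then obtain u where "u \<in> cyc_edge n k" "{w} = {u}"
    using edge_arc_iff[OF assms(2)] by blast
  then show ?thesis by simp
qed

lemma head_matched_propagates:
  assumes m: "is_matching poset_arcs m" and k: "k < n"
    and head: "(cyc_edge n k, {Suc k mod n}) \<in> m"
    and matched: "(cyc_edge n (Suc k mod n), {w}) \<in> m"
  shows "w = Suc (Suc k mod n) mod n"
proof -
  have "w \<in> cyc_edge n (Suc k mod n)"
    using matched_endpoint[OF m Suc_mod_lt matched] .
  moreover have "w \<noteq> Suc k mod n"
  proof
    assume "w = Suc k mod n"
    with is_matching_snd_eq[OF m head matched] have "cyc_edge n k = cyc_edge n (Suc k mod n)"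
      by simp
    then have "k = Suc k mod n" using cyc_edge_inj[OF k Suc_mod_lt] by blast
    with Suc_mod_neq[OF k] show False by simp
  qed
  ultimately show ?thesis by (simp add: mem_cyc_edge)
qed

text \<open>If some edge is matched to its head, the heads propagate around the circle;
otherwise every edge is matched to its tail.\<close>
lemma all_edges_matched_cases:
  assumes m: "is_matching poset_arcs m"
    and matched: "\<And>k. k < n \<Longrightarrow> \<exists>w. (cyc_edge n k, {w}) \<in> m"
  shows "m = tail_matching n \<or> m = head_matching n"
proof (cases "\<exists>k0<n. (cyc_edge n k0, {Suc k0 mod n}) \<in> m")
  case True
  then obtain k0 where k0: "k0 < n" "(cyc_edge n k0, {Suc k0 mod n}) \<in> m" by blast
  have around: "(cyc_edge n ((k0 + j) mod n), {Suc ((k0 + j) mod n) mod n}) \<in> m" for j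
  proof (induction j)
    case 0
    then show ?case using k0 by simp
  next
    case (Suc j)
    have lt: "(k0 + j) mod n < n" using three_le by simp
    obtain w where w: "(cyc_edge n (Suc ((k0 + j) mod n) mod n), {w}) \<in> m"
      using matched Suc_mod_lt by blast
    with head_matched_propagates[OF m lt Suc.IH] have "w = Suc (Suc ((k0 + j) mod n) mod n) mod n"
      by blast
    with w show ?case by (simp add: mod_Suc_eq)
  qed
  have "(cyc_edge n k, {Suc k mod n}) \<in> m" if "k < n" for k
    using around[of "k + n - k0"] k0(1) that by simp
  then have "m = edge_matching n (\<lambda>k. Suc k mod n)" by (rule matching_eq_edge_matching[OF m])
  then show ?thesis unfolding head_matching_def by blast
next
  case False
  have "(cyc_edge n k, {k}) \<in> m" if k: "k < n" for k
  proof -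
    obtain w where w: "(cyc_edge n k, {w}) \<in> m" using matched[OF k] by blast
    with matched_endpoint[OF m k] False k show ?thesis by (auto simp: mem_cyc_edge)
  qed
  then have "m = edge_matching n (\<lambda>k. k)" by (rule matching_eq_edge_matching[OF m])
  then show ?thesis unfolding tail_matching_def by blast
qed

lemma Jnum_eq_one_imp_tail_or_head:
  assumes m: "is_matching poset_arcs m" and J: "Jnum poset_arcs m = 1"
  shows "m = tail_matching n \<or> m = head_matching n"
proof -
  obtain xs where "xs \<noteq> []" "cyc_arcs xs \<subseteq> reversed poset_arcs m"
    using J Jnum_eq_one_iff_has_dcycle[OF m] unfolding dcycles_def by blast
  with m have cyc: "reversal_cycle n m xs"
    by (intro reversal_cycle.intro cycle_graph_axioms reversal_cycle_axioms.intro)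
  have "\<exists>w. (cyc_edge n k, {w}) \<in> m" if "k < n" for k
    using reversal_cycle.edge_matched[OF cyc that] by metis
  then show ?thesis by (rule all_edges_matched_cases[OF m])
qed

context
  fixes f :: "nat \<Rightarrow> nat"
  assumes f_inj: "inj_on f {..<n}" and f_endpoint: "\<And>k. k < n \<Longrightarrow> f k \<in> cyc_edge n k"
begin

lemma is_matching_edge_matching: "is_matching poset_arcs (edge_matching n f)"
  unfolding is_matching_def
proof (intro conjI ballI impI)
  show "edge_matching n f \<subseteq> poset_arcs"
    unfolding edge_matching_def using f_endpoint edge_arc_iff by blast
next
  fix a b assume "a \<in> edge_matching n f" "b \<in> edge_matching n f" "a \<noteq> b"
  then obtain j k where jk: "j < n" "k < n" "j \<noteq> k"
    "a = (cyc_edge n j, {f j})" "b = (cyc_edge n k, {f k})"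
    unfolding edge_matching_def by blast
  have "cyc_edge n j \<noteq> cyc_edge n k" using jk(1-3) cyc_edge_inj by blast
  moreover have "f j \<noteq> f k" using jk(1-3) inj_onD[OF f_inj] by blast
  ultimately show "fst a \<noteq> fst b" "fst a \<noteq> snd b" "snd a \<noteq> fst b" "snd a \<noteq> snd b"
    using jk by simp_all
qed

lemma card_edge_matching: "card (edge_matching n f) = n"
proof -
  have "inj_on (\<lambda>k. (cyc_edge n k, {f k})) {..<n}"
    by (auto intro: inj_onI simp: cyc_edge_eq_iff)
  then show ?thesis unfolding edge_matching_def by (simp add: card_image)
qed

text \<open>In the reversed digraph each vertex leads to the edge matched with it and each edge to
its other endpoint, so there is a directed cycle.\<close>
lemma Jnum_edge_matching: "Jnum poset_arcs (edge_matching n f) = 1"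
proof -
  let ?N = "(\<lambda>v. {v}) ` {..<n} \<union> cyc_edge n ` {..<n}"
  let ?R = "reversed poset_arcs (edge_matching n f)"
  have f_surj: "f ` {..<n} = {..<n}"
    using f_inj f_endpoint mem_cyc_edge_less by (intro endo_inj_surj) auto
  have "\<exists>y\<in>?N. (x, y) \<in> ?R" if x: "x \<in> ?N" for x
  proof -
    consider (vertex) v where "v < n" "x = {v}" | (edge) k where "k < n" "x = cyc_edge n k"
      using x by blast
    then show ?thesis
    proof cases
      case vertex
      then have "v \<in> f ` {..<n}" using f_surj by simp
      then obtain k where k: "k < n" "f k = v" by auto
      then have "(x, cyc_edge n k) \<in> ?R"
        unfolding vertex(2) reversed_iff edge_matching_def by blast
      with k(1) show ?thesis by blast
    next
      case edge
      define u where "u = (if f k = k then Suc k mod n else k)"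
      have u: "u \<in> cyc_edge n k" "u \<noteq> f k" "u < n"
        using f_endpoint[OF edge(1)] Suc_mod_lt Suc_mod_neq[OF edge(1)] edge(1)
        by (auto simp: u_def mem_cyc_edge)
      have "(x, {u}) \<notin> edge_matching n f"
        unfolding edge(2) edge_matching_def using edge(1) u(2) cyc_edge_inj by blast
      moreover have "(x, {u}) \<in> poset_arcs"
        unfolding edge(2) using edge_arc_iff[OF edge(1)] u(1) by blast
      ultimately have "(x, {u}) \<in> ?R" unfolding reversed_iff by blast
      with u(3) show ?thesis by blast
    qed
  qed
  moreover have "finite ?N" "{0} \<in> ?N" using three_le by auto
  ultimately obtain xs where "xs \<noteq> []" "distinct xs" "cyc_arcs xs \<subseteq> ?R"
    using finite_digraph_has_cycle[of ?N "{0}" ?R] by blast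
  then have "dcycles ?R \<noteq> {}" unfolding dcycles_def by blast
  then show ?thesis
    using Jnum_eq_one_iff_has_dcycle[OF is_matching_edge_matching] by blast
qed

end

lemmas is_matching_tail_matching =
  is_matching_edge_matching[OF inj_on_id2 tail_mem_cyc_edge, folded tail_matching_def]
lemmas card_tail_matching =
  card_edge_matching[OF inj_on_id2 tail_mem_cyc_edge, folded tail_matching_def]
lemmas Jnum_tail_matching =
  Jnum_edge_matching[OF inj_on_id2 tail_mem_cyc_edge, folded tail_matching_def]

lemmas is_matching_head_matching =
  is_matching_edge_matching[OF Suc_mod_inj_on head_mem_cyc_edge, folded head_matching_def]
lemmas card_head_matching =
  card_edge_matching[OF Suc_mod_inj_on head_mem_cyc_edge, folded head_matching_def]
lemmas Jnum_head_matching =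
  Jnum_edge_matching[OF Suc_mod_inj_on head_mem_cyc_edge, folded head_matching_def]

lemma tail_matching_neq_head_matching: "tail_matching n \<noteq> head_matching n"
proof
  assume eq: "tail_matching n = head_matching n"
  have "0 < n" using three_le by simp
  then have "(cyc_edge n 0, {0}) \<in> tail_matching n"
    unfolding tail_matching_def edge_matching_def by force
  then have "(cyc_edge n 0, {0}) \<in> head_matching n"
    by (simp only: eq)
  then obtain k where "k < n" "cyc_edge n 0 = cyc_edge n k" "0 = Suc k mod n"
    unfolding head_matching_def edge_matching_def by blast
  then have "k = 0" "0 = Suc 0 mod n" using cyc_edge_inj[OF \<open>0 < n\<close>] by blast+
  with three_le show False by simp
qed

text \<open>A matching with J = 1 covers every edge, so it cannot lose an arc and keep J = 1.\<close>
lemma Jnum_remove_arc: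
  assumes m: "is_matching poset_arcs m" and a: "a \<in> m"
  shows "Jnum poset_arcs (m - {a}) = 0"
proof -
  have m': "is_matching poset_arcs (m - {a})" using is_matching_subset[OF m] by blast
  obtain k where k: "k < n" "fst a = cyc_edge n k"
    using matching_arc_source[OF m a] by blast
  have "Jnum poset_arcs (m - {a}) \<noteq> 1"
  proof
    assume "Jnum poset_arcs (m - {a}) = 1"
    then obtain f where "m - {a} = edge_matching n f"
      using Jnum_eq_one_imp_tail_or_head[OF m'] unfolding tail_matching_def head_matching_def by blast
    then have "(cyc_edge n k, {f k}) \<in> m - {a}"
      unfolding edge_matching_def using k(1) by blast
    moreover have "fst (cyc_edge n k, {f k}) = fst a" using k(2) by simp
    ultimately show False using is_matching_fst_eq[OF m _ a] by blast
  qed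
  with Jnum_le_one[OF m'] show ?thesis by simp
qed

lemma hH_zero_eq_simp_homology:
  "hH (cycE n) i 0 = simp_homology (acyc_simplices poset_arcs) i"
  unfolding hH_def simp_homology_def acyc_simplices_def
proof (rule homology_cong)
  fix s assume "s \<in> {m \<in> match_simplices poset_arcs. Jnum poset_arcs m = 0}"
  then have s: "is_matching poset_arcs s" "Jnum poset_arcs s = 0"
    unfolding match_simplices_def by auto
  have "(e \<in> s \<and> 2 \<le> card s \<and> Jnum poset_arcs (s - {e}) = Jnum poset_arcs s)
      \<longleftrightarrow> (e \<in> s \<and> 2 \<le> card s)" for e
    using Jnum_remove_arc[OF s(1), of e] s(2) by auto
  then show "bdJ poset_arcs s = simp_bd s"
    unfolding bdJ_def simp_bd_def by simp
qed

lemma Jnum_one_simplices: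
  "{m \<in> match_simplices poset_arcs. Jnum poset_arcs m = 1}
     = {tail_matching n, head_matching n}"
proof -
  have "0 < card (tail_matching n)" "0 < card (head_matching n)"
    using card_tail_matching card_head_matching three_le by simp_all
  then have "tail_matching n \<noteq> {}" "head_matching n \<noteq> {}"
    by (simp_all add: card_gt_0_iff)
  with is_matching_tail_matching is_matching_head_matching Jnum_tail_matching Jnum_head_matching
  show ?thesis
    unfolding match_simplices_def using Jnum_eq_one_imp_tail_or_head by auto
qed

lemma card_hH_one: "card (hH (cycE n) i 1) = (if i = n - 1 then 2 ^ 2 else 2 ^ 0)"
proof -
  have "card (hH (cycE n) i 1) = 2 ^ card {s \<in> {tail_matching n, head_matching n}. card s = Suc i}"
    unfolding hH_def Jnum_one_simplices
  proof (rule card_homology_zero_boundary)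
    fix s assume "s \<in> {tail_matching n, head_matching n}"
    then have s: "is_matching poset_arcs s" "Jnum poset_arcs s = 1"
      using is_matching_tail_matching is_matching_head_matching Jnum_tail_matching Jnum_head_matching
      by auto
    then show "bdJ poset_arcs s = {}"
      unfolding bdJ_def using Jnum_remove_arc[OF s(1)] by auto
  qed simp
  moreover have "{s \<in> {tail_matching n, head_matching n}. card s = Suc i}
      = (if i = n - 1 then {tail_matching n, head_matching n} else {})"
    using card_tail_matching card_head_matching three_le by auto
  moreover have "card {tail_matching n, head_matching n} = 2"
    using tail_matching_neq_head_matching by simp
  ultimately show ?thesis by simp
qed

lemma card_hH_ge_two: "2 \<le> j \<Longrightarrow> card (hH (cycE n) i j) = 2 ^ 0"
proof -
  assume "2 \<le> j"
  then have "Jnum poset_arcs m \<noteq> j" if "m \<in> match_simplices poset_arcs" for m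
    using Jnum_le_one[of m] that unfolding match_simplices_def by auto
  then have empty: "{m \<in> match_simplices poset_arcs. Jnum poset_arcs m = j} = {}"
    by blast
  show ?thesis
    unfolding hH_def empty by (subst card_homology_zero_boundary) auto
qed

end

theorem mainTheorem9:
  fixes n :: nat
  assumes "n \<ge> 3"
  shows "(\<forall>i. card (hH (cycE n) i 0) = card (simp_homology (acyc_simplices (fp_arcs (cycE n))) i))
       \<and> (\<forall>i. card (hH (cycE n) i 1) = (if i = n - 1 then 2 ^ 2 else 2 ^ 0))
       \<and> (\<forall>i j. j \<ge> 2 \<longrightarrow> card (hH (cycE n) i j) = 2 ^ 0)"
proof -
  interpret cycle_graph n by (rule cycle_graph.intro[OF assms])
  show ?thesis using hH_zero_eq_simp_homology card_hH_one card_hH_ge_two by simp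
qed

end
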